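(* Let $\mathcal{X},\mathcal{Y}$ be finite sets, $P$ and $Q$ joint probability mass functions on $\mathcal{X}\times\mathcal{Y}$ that are strictly positive everywhere, $q\in\mathbb{R}$ and $\rho>0$. Let $G_Q^\ast$ be a conditional guessing function such that for all $y$ and $x,x'$, $G_Q^\ast(x|y)<G_Q^\ast(x'|y)$ implies $Q_q(x|y)\ge Q_q(x'|y)$. Then, with $E_q$ taken with respect to $P$, $$ E_q\left[G_Q^\ast(X|Y)^\rho\right]\;\leq\;\sum_{y\in\mathcal{Y}}P_q(\cdot,y)\sum_{x\in\mathcal{X}}P_q(x|y)\left[\sum_{x'\in\mathcal{X}}\left(\frac{Q_q(x'|y)}{Q_q(x|y)}\right)^{\frac{1}{1+\rho}}\right]^{\rho}. $$
   Context: A conditional guessing function is a map $G(\cdot|\cdot)$ on $\mathcal{X}\times\mathcal{Y}$ such that for each $y$, $x\mapsto G(x|y)$ is a bijection from $\mathcal{X}$ onto $\{1,\dots,|\mathcal{X}|\}$. The $q$-normalized expectation under $P$ is $E_q[F(X,Y)]=\frac{\sum_{x,y}F(x,y)P(x,y)^q}{\sum_{x,y}P(x,y)^q}$. For a strictly positive joint pmf $R$ on $\mathcal{X}\times\mathcal{Y}$: $R(x|y)=R(x,y)/\sum_{x'}R(x',y)$, $R_q(x|y)=\frac{R(x|y)^q}{\sum_{x'}R(x'|y)^q}$, and $R_q(\cdot,y)=\frac{\sum_{x}R(x,y)^q}{\sum_{x',y'}R(x',y')^q}$; this applies to $R=P$ and $R=Q$. *)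

theory Defs
  imports "HOL-Analysis.Analysis"
begin

definition is_pmf :: "('a \<times> 'b \<Rightarrow> real) \<Rightarrow> bool" where
  "is_pmf R \<longleftrightarrow> (\<forall>z. R z \<ge> 0) \<and> (\<Sum>z\<in>UNIV. R z) = 1"

definition cond_guessing_function :: "('a::finite \<Rightarrow> 'b \<Rightarrow> nat) \<Rightarrow> bool" where
  "cond_guessing_function G \<longleftrightarrow> (\<forall>y. bij_betw (\<lambda>x. G x y) UNIV {1..CARD('a)})"

definition cond_pmf :: "('a::finite \<times> 'b \<Rightarrow> real) \<Rightarrow> 'a \<Rightarrow> 'b \<Rightarrow> real" where
  "cond_pmf R x y = R (x, y) / (\<Sum>x'\<in>UNIV. R (x', y))"

definition cond_q :: "real \<Rightarrow> ('a::finite \<times> 'b \<Rightarrow> real) \<Rightarrow> 'a \<Rightarrow> 'b \<Rightarrow> real" where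
  "cond_q q R x y = cond_pmf R x y powr q / (\<Sum>x'\<in>UNIV. cond_pmf R x' y powr q)"

definition marg_q :: "real \<Rightarrow> ('a::finite \<times> 'b::finite \<Rightarrow> real) \<Rightarrow> 'b \<Rightarrow> real" where
  "marg_q q R y = (\<Sum>x\<in>UNIV. R (x, y) powr q) / (\<Sum>z\<in>UNIV. R z powr q)"

definition E_q :: "real \<Rightarrow> ('a::finite \<times> 'b::finite \<Rightarrow> real) \<Rightarrow> ('a \<Rightarrow> 'b \<Rightarrow> real) \<Rightarrow> real" where
  "E_q q P F = (\<Sum>(x, y)\<in>UNIV. F x y * P (x, y) powr q) / (\<Sum>z\<in>UNIV. P z powr q)"

end

theory Submission
  imports Defs
begin

text \<open>Arikan's bound: when guesses are made in order of decreasing \<open>Q\<^sub>q(\<cdot>|y)\<close>, every \<open>x'\<close>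
  guessed no later than \<open>x\<close> has \<open>(Q\<^sub>q(x'|y) / Q\<^sub>q(x|y)) powr (1/(1+\<rho>)) \<ge> 1\<close>, so the rank
  \<open>G(x|y)\<close> is at most the sum of these terms over all \<open>x'\<close>. Raise this to the power \<rho> and average,
  after splitting the \<open>q\<close>-normalised expectation into the marginal \<open>P\<^sub>q(\<cdot>,y)\<close> and the conditional
  \<open>P\<^sub>q(x|y)\<close>.\<close>

lemma cond_q_eq:
  fixes R :: "'a::finite \<times> 'b \<Rightarrow> real"
  assumes "\<forall>z. R z > 0"
  shows "cond_q q R x y = R (x, y) powr q / (\<Sum>x'\<in>UNIV. R (x', y) powr q)"
proof -
  define m where "m = (\<Sum>x'\<in>UNIV. R (x', y))"
  have "m > 0" unfolding m_def using assms by (intro sum_pos) auto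
  then have cond_pmf_powr: "cond_pmf R x' y powr q = R (x', y) powr q / m powr q" for x'
    unfolding cond_pmf_def m_def[symmetric] using assms by (simp add: powr_divide less_imp_le)
  show ?thesis
    using \<open>m > 0\<close> unfolding cond_q_def cond_pmf_powr by (simp add: sum_divide_distrib[symmetric])
qed

lemma cond_q_pos:
  fixes R :: "'a::finite \<times> 'b \<Rightarrow> real"
  assumes "\<forall>z. R z > 0"
  shows "cond_q q R x y > 0"
proof -
  have "(\<Sum>x'\<in>UNIV. R (x', y) powr q) > 0"
    using assms by (intro sum_pos) (auto simp: less_imp_neq[symmetric])
  moreover have "R (x, y) powr q > 0"
    using assms by (simp add: less_imp_neq[symmetric])
  ultimately show ?thesis
    using assms by (simp add: cond_q_eq)
qed

lemma marg_q_mult_cond_q: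
  fixes R :: "'a::finite \<times> 'b::finite \<Rightarrow> real"
  assumes "\<forall>z. R z > 0"
  shows "marg_q q R y * cond_q q R x y = R (x, y) powr q / (\<Sum>z\<in>UNIV. R z powr q)"
proof -
  have "(\<Sum>x'\<in>UNIV. R (x', y) powr q) > 0"
    using assms by (intro sum_pos) (auto simp: less_imp_neq[symmetric])
  then show ?thesis
    unfolding marg_q_def cond_q_eq[OF assms] by simp
qed

lemma E_q_eq_sum_marg_q_cond_q:
  fixes P :: "'a::finite \<times> 'b::finite \<Rightarrow> real"
  assumes "\<forall>z. P z > 0"
  shows "E_q q P F = (\<Sum>y\<in>UNIV. marg_q q P y * (\<Sum>x\<in>UNIV. cond_q q P x y * F x y))"
proof -
  define Z where "Z = (\<Sum>z\<in>UNIV. P z powr q)"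
  have "(\<Sum>(x, y)\<in>UNIV. F x y * P (x, y) powr q) = (\<Sum>x\<in>UNIV. \<Sum>y\<in>UNIV. F x y * P (x, y) powr q)"
    unfolding UNIV_Times_UNIV[symmetric] by (rule sum.cartesian_product[symmetric])
  also have "\<dots> = (\<Sum>y\<in>UNIV. \<Sum>x\<in>UNIV. F x y * P (x, y) powr q)"
    by (rule sum.swap)
  finally have "E_q q P F = (\<Sum>y\<in>UNIV. \<Sum>x\<in>UNIV. F x y * (P (x, y) powr q / Z))"
    unfolding E_q_def Z_def[symmetric] by (simp add: sum_divide_distrib)
  also have "\<dots> = (\<Sum>y\<in>UNIV. marg_q q P y * (\<Sum>x\<in>UNIV. cond_q q P x y * F x y))"
    unfolding Z_def marg_q_mult_cond_q[OF assms, symmetric]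
    by (simp add: sum_distrib_left mult_ac)
  finally show ?thesis .
qed

lemma card_rank_le:
  fixes g :: "'a::finite \<Rightarrow> nat"
  assumes "bij_betw g UNIV {1..CARD('a)}"
  shows "card {x'. g x' \<le> g x} = g x"
proof -
  have "g ` {x'. g x' \<le> g x} = {1..g x}"
  proof
    show "g ` {x'. g x' \<le> g x} \<subseteq> {1..g x}"
      using assms by (auto simp: bij_betw_def)
    show "{1..g x} \<subseteq> g ` {x'. g x' \<le> g x}"
    proof
      fix k assume k: "k \<in> {1..g x}"
      have "g x \<le> CARD('a)" using assms by (auto simp: bij_betw_def)
      with k have "k \<in> g ` UNIV" using assms by (auto simp: bij_betw_def)
      with k show "k \<in> g ` {x'. g x' \<le> g x}" by auto
    qed
  qed
  moreover have "inj_on g {x'. g x' \<le> g x}"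
    using assms by (auto simp: bij_betw_def intro: inj_on_subset)
  ultimately show ?thesis
    using card_image by fastforce
qed

lemma rank_le_sum:
  fixes g :: "'a::finite \<Rightarrow> nat" and f :: "'a \<Rightarrow> real"
  assumes "bij_betw g UNIV {1..CARD('a)}"
    and "\<And>x'. g x' \<le> g x \<Longrightarrow> f x' \<ge> 1"
    and "\<And>x'. f x' \<ge> 0"
  shows "real (g x) \<le> (\<Sum>x'\<in>UNIV. f x')"
proof -
  have "real (g x) = (\<Sum>x'\<in>{x'. g x' \<le> g x}. 1)"
    using card_rank_le[OF assms(1)] by simp
  also have "\<dots> \<le> (\<Sum>x'\<in>{x'. g x' \<le> g x}. f x')"
    using assms(2) by (intro sum_mono) auto
  also have "\<dots> \<le> (\<Sum>x'\<in>UNIV. f x')"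
    using assms(3) by (intro sum_mono2) auto
  finally show ?thesis .
qed

lemma guess_le_sum_ratio_powr:
  fixes G :: "'a::finite \<Rightarrow> 'b \<Rightarrow> nat" and Q :: "'a \<Rightarrow> 'b \<Rightarrow> real" and s :: real
  assumes "cond_guessing_function G"
    and "\<And>x x'. G x y < G x' y \<Longrightarrow> Q x y \<ge> Q x' y"
    and "\<And>x. Q x y > 0" and "s \<ge> 0"
  shows "real (G x y) \<le> (\<Sum>x'\<in>UNIV. (Q x' y / Q x y) powr s)"
proof -
  have bij: "bij_betw (\<lambda>x. G x y) UNIV {1..CARD('a)}"
    using assms(1) unfolding cond_guessing_function_def by blast
  show ?thesis
  proof (rule rank_le_sum[OF bij])
    fix x' assume "G x' y \<le> G x y"
    then have "x' = x \<or> G x' y < G x y"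
      using bij by (auto simp: bij_betw_def inj_def)
    then have "Q x' y / Q x y \<ge> 1"
      using assms(2) assms(3)[of x] by auto
    then show "(Q x' y / Q x y) powr s \<ge> 1"
      using assms(4) by (simp add: ge_one_powr_ge_zero)
  qed simp
qed

theorem theorem4:
  fixes P Q :: "'x::finite \<times> 'y::finite \<Rightarrow> real"
    and q \<rho> :: real
    and G :: "'x \<Rightarrow> 'y \<Rightarrow> nat"
  assumes "is_pmf P" and "is_pmf Q"
    and "\<forall>z. P z > 0" and "\<forall>z. Q z > 0"
    and "\<rho> > 0"
    and "cond_guessing_function G"
    and "\<forall>y x x'. G x y < G x' y \<longrightarrow> cond_q q Q x y \<ge> cond_q q Q x' y"
  shows "E_q q P (\<lambda>x y. real (G x y) powr \<rho>)
    \<le> (\<Sum>y\<in>UNIV. marg_q q P y * (\<Sum>x\<in>UNIV. cond_q q P x y *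
          (\<Sum>x'\<in>UNIV. (cond_q q Q x' y / cond_q q Q x y) powr (1 / (1 + \<rho>))) powr \<rho>))"
proof -
  have rank_bound: "real (G x y) \<le> (\<Sum>x'\<in>UNIV. (cond_q q Q x' y / cond_q q Q x y) powr (1 / (1 + \<rho>)))"
    for x y
    using assms(4-7) cond_q_pos by (intro guess_le_sum_ratio_powr) auto
  have marg_cond_nonneg: "marg_q q P y \<ge> 0" "cond_q q P x y \<ge> 0" for x y
    using cond_q_pos[OF assms(3)] unfolding marg_q_def
    by (simp_all add: less_imp_le divide_nonneg_nonneg sum_nonneg)
  show ?thesis
    unfolding E_q_eq_sum_marg_q_cond_q[OF assms(3)]
    using rank_bound marg_cond_nonneg assms(5)
    by (intro sum_mono mult_left_mono powr_mono2) auto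
qed

end
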